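(* Let $G$ be a connected $d$-regular simple graph of order $n$, where $d\ge 3$, with adjacency eigenvalues $d=\lambda_1>\lambda_2\ge\cdots\ge\lambda_n$. Then \[ \mathscr{K}_e(G)=n(d-1)+\sum_{i=2}^{n}\frac{d}{d-\lambda_i}. \]
   Context: Kemeny's constant of an irreducible finite Markov chain with transition matrix $P$ whose eigenvalues (with multiplicity) are $1=\rho_1,\rho_2,\dots,\rho_N$ (with $1$ simple) is $\mathscr{K}(P)=\sum_{i=2}^{N}\frac{1}{1-\rho_i}$. The edge Kemeny's constant $\mathscr{K}_e(G)$ is Kemeny's constant of the simple random walk on the arcs of $G$: the states are the $2|E(G)|$ arcs $(u,v)$ with $\{u,v\}\in E(G)$, and from arc $(u,v)$ the walk moves to arc $(v,w)$ with probability $1/\deg(v)$ for each neighbor $w$ of $v$ (including $w=u$). *)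

theory Defs
  imports Complex_Main "HOL-Computational_Algebra.Polynomial" "HOL-Combinatorics.Permutations"
begin

definition charpoly :: "'i set \<Rightarrow> ('i \<Rightarrow> 'i \<Rightarrow> complex) \<Rightarrow> complex poly" where
  "charpoly S M = (\<Sum>p | p permutes S. of_int (sign p) *
      (\<Prod>i\<in>S. (if p i = i then [:0, 1:] else 0) - [:M i (p i):]))"

definition eigenvalues :: "'i set \<Rightarrow> ('i \<Rightarrow> 'i \<Rightarrow> complex) \<Rightarrow> complex multiset" where
  "eigenvalues S M = proots (charpoly S M)"

definition kemeny :: "'i set \<Rightarrow> ('i \<Rightarrow> 'i \<Rightarrow> complex) \<Rightarrow> complex" where
  "kemeny S P = (\<Sum>\<rho>\<in># eigenvalues S P - {#1#}. 1 / (1 - \<rho>))"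

definition simple_graph :: "'a set \<Rightarrow> ('a \<Rightarrow> 'a \<Rightarrow> bool) \<Rightarrow> bool" where
  "simple_graph V E \<longleftrightarrow> finite V \<and> (\<forall>u v. E u v \<longrightarrow> u \<in> V \<and> v \<in> V)
     \<and> (\<forall>u v. E u v \<longrightarrow> E v u) \<and> (\<forall>v. \<not> E v v)"

definition degree :: "'a set \<Rightarrow> ('a \<Rightarrow> 'a \<Rightarrow> bool) \<Rightarrow> 'a \<Rightarrow> nat" where
  "degree V E v = card {w \<in> V. E v w}"

definition regular :: "'a set \<Rightarrow> ('a \<Rightarrow> 'a \<Rightarrow> bool) \<Rightarrow> nat \<Rightarrow> bool" where
  "regular V E d \<longleftrightarrow> (\<forall>v\<in>V. degree V E v = d)"

definition connected_graph :: "'a set \<Rightarrow> ('a \<Rightarrow> 'a \<Rightarrow> bool) \<Rightarrow> bool" where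
  "connected_graph V E \<longleftrightarrow> (\<forall>u\<in>V. \<forall>v\<in>V. E\<^sup>*\<^sup>* u v)"

definition adjacency :: "('a \<Rightarrow> 'a \<Rightarrow> bool) \<Rightarrow> 'a \<Rightarrow> 'a \<Rightarrow> complex" where
  "adjacency E u v = (if E u v then 1 else 0)"

text \<open>Arcs (ordered pairs of adjacent vertices) and the simple random walk on arcs:
  from (u,v) move to (v,w) with probability 1/deg v.\<close>
definition arcs :: "'a set \<Rightarrow> ('a \<Rightarrow> 'a \<Rightarrow> bool) \<Rightarrow> ('a \<times> 'a) set" where
  "arcs V E = {(u, v). u \<in> V \<and> v \<in> V \<and> E u v}"

definition arc_walk :: "'a set \<Rightarrow> ('a \<Rightarrow> 'a \<Rightarrow> bool) \<Rightarrow> 'a \<times> 'a \<Rightarrow> 'a \<times> 'a \<Rightarrow> complex" where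
  "arc_walk V E a b = (if snd a = fst b then 1 / of_nat (degree V E (snd a)) else 0)"

definition edge_kemeny :: "'a set \<Rightarrow> ('a \<Rightarrow> 'a \<Rightarrow> bool) \<Rightarrow> complex" where
  "edge_kemeny V E = kemeny (arcs V E) (arc_walk V E)"

end

theory Submission
  imports Defs "Jordan_Normal_Form.Jordan_Normal_Form_Existence"
begin

(* The arc walk factors through the vertices: P = T S with S w b = [w is the tail of b] and
   T a w = [w is the head of a] / d, while S T = A / d.  By Sylvester's determinant identity
   T S and S T have the same characteristic polynomial up to a power of x, so the spectrum of P
   consists of the eigenvalues mu / d of A / d and n d - n additional zeros.  In Kemeny's constant
   each zero contributes 1, each mu / d contributes d / (d - mu), and the eigenvalue d of A
   corresponds to the eigenvalue 1 of P. *)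

lemma semiring_hom_const_poly: "semiring_hom (\<lambda>a::'a::comm_ring_1. [:a:])"
  by unfold_locales (auto simp: one_pCons)

lemma char_poly_mult_commute:
  fixes T S :: "'a :: idom mat"
  assumes T: "T \<in> carrier_mat N n" and S: "S \<in> carrier_mat n N"
  shows "[:0,1:] ^ n * char_poly (T * S) = [:0,1:] ^ N * char_poly (S * T)"
proof -
  let ?X = "[:0,1:] :: 'a poly"
  let ?h = "map_mat (\<lambda>a. [:a:])"
  define T' where "T' = ?h T"
  define S' where "S' = ?h S"
  have T': "T' \<in> carrier_mat N n" and S': "S' \<in> carrier_mat n N"
    using T S by (auto simp: T'_def S'_def)
  have hom_TS: "?h (T * S) = T' * S'" and hom_ST: "?h (S * T) = S' * T'"
    unfolding T'_def S'_def
    by (rule semiring_hom.mat_hom_mult[OF semiring_hom_const_poly T S],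
        rule semiring_hom.mat_hom_mult[OF semiring_hom_const_poly S T])
  have char_TS: "char_poly (T * S) = det (?X \<cdot>\<^sub>m 1\<^sub>m N - T' * S')"
    and char_ST: "char_poly (S * T) = det (?X \<cdot>\<^sub>m 1\<^sub>m n - S' * T')"
    unfolding char_poly_def char_poly_matrix_def hom_TS[symmetric] hom_ST[symmetric] using T S
    by (auto intro!: arg_cong[where f = det] eq_matI)
  (* Multiplying M = [[x I, T], [S, I]] by L1 on the right, resp. by L2 on the left, clears
     its lower-left block. *)
  define M where "M = four_block_mat (?X \<cdot>\<^sub>m 1\<^sub>m N) T' S' (1\<^sub>m n)"
  define L1 where "L1 = four_block_mat (1\<^sub>m N) (0\<^sub>m N n) (- S') (1\<^sub>m n)"
  define L2 where "L2 = four_block_mat (1\<^sub>m N) (0\<^sub>m N n) (- S') (?X \<cdot>\<^sub>m 1\<^sub>m n)"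
  have M: "M \<in> carrier_mat (N+n) (N+n)" and L1: "L1 \<in> carrier_mat (N+n) (N+n)"
    and L2: "L2 \<in> carrier_mat (N+n) (N+n)"
    unfolding M_def L1_def L2_def using T' S' by auto
  have ML1: "M * L1 = four_block_mat (?X \<cdot>\<^sub>m 1\<^sub>m N - T' * S') T' (0\<^sub>m n N) (1\<^sub>m n)"
    unfolding M_def L1_def using T' S' by (subst mult_four_block_mat[where ?nr1.0 = N and
        ?n1.0 = N and ?nr2.0 = n and ?n2.0 = n and ?nc1.0 = N and ?nc2.0 = n]) auto
  have "det (M * L1) = char_poly (T * S)"
    unfolding ML1 char_TS using T' S' by (subst det_four_block_mat_lower_left_zero[of _ N _ n]) auto
  moreover have "det L1 = 1"
    unfolding L1_def using S' by (subst det_four_block_mat_upper_right_zero[of _ N _ n]) auto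
  ultimately have det_M: "det M = char_poly (T * S)"
    using det_mult[OF M L1] by simp
  have L2M: "L2 * M =
      four_block_mat (?X \<cdot>\<^sub>m 1\<^sub>m N) T' (0\<^sub>m n N) (?X \<cdot>\<^sub>m 1\<^sub>m n - S' * T')"
    unfolding M_def L2_def using T' S' by (subst mult_four_block_mat[where ?nr1.0 = N and
        ?n1.0 = N and ?nr2.0 = n and ?n2.0 = n and ?nc1.0 = N and ?nc2.0 = n]) auto
  have "det (L2 * M) = ?X ^ N * char_poly (S * T)"
    unfolding L2M char_ST using T' S' by (subst det_four_block_mat_lower_left_zero[of _ N _ n]) auto
  moreover have "det L2 = ?X ^ n"
    unfolding L2_def using S' by (subst det_four_block_mat_upper_right_zero[of _ N _ n]) auto
  ultimately show ?thesis
    using det_mult[OF L2 M] det_M by simp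
qed

lemma proots_char_poly_mult_commute:
  fixes T S :: "'a :: idom mat"
  assumes T: "T \<in> carrier_mat N n" and S: "S \<in> carrier_mat n N"
  shows "replicate_mset n 0 + proots (char_poly (T * S)) =
    replicate_mset N 0 + proots (char_poly (S * T))"
proof -
  have "char_poly (T * S) \<noteq> 0" and "char_poly (S * T) \<noteq> 0"
    using degree_monic_char_poly[of "T * S" N] degree_monic_char_poly[of "S * T" n] T S by auto
  moreover have "proots ([:0,1:] :: 'a poly) = {#0#}"
    using proots_linear_factor[of "0::'a"] by simp
  ultimately show ?thesis
    using arg_cong[OF char_poly_mult_commute[OF T S], of proots]
    by (simp add: proots_mult proots_power)
qed

lemma charpoly_eq_char_poly_mat:
  assumes g: "bij_betw g {0..<k} S"
  shows "charpoly S M = char_poly (mat k k (\<lambda>(i,j). M (g i) (g j)))"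
proof -
  let ?X = "[:0,1:] :: complex poly"
  let ?A = "mat k k (\<lambda>(i,j). M (g i) (g j))"
  let ?F = "\<lambda>q i. (if q i = i then ?X else 0) - [:M i (q i):]"
  let ?lift = "\<lambda>\<pi> x. if x \<in> S then g (\<pi> (inv_into {0..<k} g x)) else x"
  have inj: "inj_on g {0..<k}" and img: "g ` {0..<k} = S"
    using g by (auto simp: bij_betw_def)
  have lift: "?lift p = map_permutation {0..<k} g p" for p
    unfolding map_permutation_def restrict_id_def img by auto
  have "charpoly S M = (\<Sum>q\<in>{q. q permutes S}. of_int (sign q) * (\<Prod>i\<in>S. ?F q i))"
    unfolding charpoly_def by simp
  also have "\<dots> = (\<Sum>p\<in>{p. p permutes {0..<k}}.
      of_int (sign (?lift p)) * (\<Prod>i\<in>S. ?F (?lift p) i))"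
    by (rule sum.reindex_bij_betw[OF bij_betw_permutations[OF g], symmetric])
  also have "\<dots> = (\<Sum>p\<in>{p. p permutes {0..<k}}.
      signof p * (\<Prod>i=0..<k. char_poly_matrix ?A $$ (i, p i)))"
  proof (rule sum.cong[OF refl])
    fix p assume "p \<in> {p. p permutes {0..<k}}"
    then have p: "p permutes {0..<k}" by simp
    have "(\<Prod>i\<in>S. ?F (?lift p) i) = (\<Prod>i\<in>{0..<k}. ?F (?lift p) (g i))"
      by (rule prod.reindex_bij_betw[OF g, symmetric])
    also have "\<dots> = (\<Prod>i=0..<k. char_poly_matrix ?A $$ (i, p i))"
    proof (rule prod.cong[OF refl])
      fix i assume i: "i \<in> {0..<k}"
      then have "p i \<in> {0..<k}" using p by (simp add: permutes_in_image)
      moreover have "?lift p (g i) = g (p i)"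
        using inj i img by (auto simp: inv_into_f_f)
      ultimately show "?F (?lift p) (g i) = char_poly_matrix ?A $$ (i, p i)"
        using i inj by (auto simp: char_poly_matrix_def dest: inj_onD)
    qed
    finally show "of_int (sign (?lift p)) * (\<Prod>i\<in>S. ?F (?lift p) i) =
        signof p * (\<Prod>i=0..<k. char_poly_matrix ?A $$ (i, p i))"
      using sign_map_permutation[OF inj p] by (simp add: lift)
  qed
  also have "\<dots> = char_poly ?A"
    unfolding char_poly_def by (rule det_def'[symmetric]) simp
  finally show ?thesis .
qed

lemma eigenvalues_eq_proots_char_poly_mat:
  "bij_betw g {0..<k} S \<Longrightarrow>
    eigenvalues S M = proots (char_poly (mat k k (\<lambda>(i,j). M (g i) (g j))))"
  by (simp add: eigenvalues_def charpoly_eq_char_poly_mat)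

lemma eigenvalues_cong:
  assumes "\<And>i j. i \<in> S \<Longrightarrow> j \<in> S \<Longrightarrow> M i j = M' i j"
  shows "eigenvalues S M = eigenvalues S M'"
  unfolding eigenvalues_def charpoly_def
  using assms by (intro arg_cong[where f = proots] sum.cong prod.cong refl)
    (auto simp: permutes_in_image)

lemma proots_char_poly_smult:
  fixes A :: "complex mat"
  assumes A: "A \<in> carrier_mat n n" and c: "c \<noteq> 0"
  shows "proots (char_poly (c \<cdot>\<^sub>m A)) = image_mset ((*) c) (proots (char_poly A))"
proof (rule multiset_eqI)
  fix x :: complex
  have "char_poly (c \<cdot>\<^sub>m A) \<noteq> 0" and "char_poly A \<noteq> 0"
    using degree_monic_char_poly[of "c \<cdot>\<^sub>m A" n] degree_monic_char_poly[OF A] A by auto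
  moreover have "(*) c -` {x} = {x / c}"
    using c by (auto simp: field_simps)
  ultimately show "count (proots (char_poly (c \<cdot>\<^sub>m A))) x =
      count (image_mset ((*) c) (proots (char_poly A))) x"
    using order_char_poly_smult[OF A c] order_root[of "char_poly A" "x / c"]
    by (auto simp: count_image_mset)
qed

lemma eigenvalues_smult:
  assumes "finite S" and "c \<noteq> 0"
  shows "eigenvalues S (\<lambda>i j. c * M i j) = image_mset ((*) c) (eigenvalues S M)"
proof -
  obtain g where g: "bij_betw g {0..<card S} S"
    using ex_bij_betw_nat_finite[OF assms(1)] by blast
  have "mat (card S) (card S) (\<lambda>(i,j). c * M (g i) (g j)) =
      c \<cdot>\<^sub>m mat (card S) (card S) (\<lambda>(i,j). M (g i) (g j))"
    by (auto intro: eq_matI)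
  then show ?thesis
    using proots_char_poly_smult[OF mat_carrier assms(2)]
    by (simp add: eigenvalues_eq_proots_char_poly_mat[OF g])
qed

lemma mat_sum_eq_mult_mat:
  assumes "bij_betw g {0..<k} K"
  shows "mat m n (\<lambda>(i,j). \<Sum>x\<in>K. A i x * B x j) =
    mat m k (\<lambda>(i,l). A i (g l)) * mat k n (\<lambda>(l,j). B (g l) j)"
  by (rule eq_matI) (auto simp: scalar_prod_def sum.reindex_bij_betw[OF assms, symmetric])

lemma eigenvalues_mult_commute:
  fixes T :: "'j \<Rightarrow> 'i \<Rightarrow> complex" and S :: "'i \<Rightarrow> 'j \<Rightarrow> complex"
  assumes "finite I" and "finite J"
  shows "replicate_mset (card I) 0 + eigenvalues J (\<lambda>a b. \<Sum>i\<in>I. T a i * S i b) =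
    replicate_mset (card J) 0 + eigenvalues I (\<lambda>u v. \<Sum>a\<in>J. S u a * T a v)"
proof -
  obtain gI where gI: "bij_betw gI {0..<card I} I"
    using ex_bij_betw_nat_finite[OF assms(1)] by blast
  obtain gJ where gJ: "bij_betw gJ {0..<card J} J"
    using ex_bij_betw_nat_finite[OF assms(2)] by blast
  define Tm where "Tm = mat (card J) (card I) (\<lambda>(a,i). T (gJ a) (gI i))"
  define Sm where "Sm = mat (card I) (card J) (\<lambda>(i,a). S (gI i) (gJ a))"
  have "eigenvalues J (\<lambda>a b. \<Sum>i\<in>I. T a i * S i b) = proots (char_poly (Tm * Sm))"
    unfolding eigenvalues_eq_proots_char_poly_mat[OF gJ] Tm_def Sm_def
    using mat_sum_eq_mult_mat[OF gI, of "card J" "card J" "\<lambda>a i. T (gJ a) i" "\<lambda>i b. S i (gJ b)"]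
    by (simp add: case_prod_beta)
  moreover have "eigenvalues I (\<lambda>u v. \<Sum>a\<in>J. S u a * T a v) = proots (char_poly (Sm * Tm))"
    unfolding eigenvalues_eq_proots_char_poly_mat[OF gI] Tm_def Sm_def
    using mat_sum_eq_mult_mat[OF gJ, of "card I" "card I" "\<lambda>u a. S (gI u) a" "\<lambda>a v. T a (gI v)"]
    by (simp add: case_prod_beta)
  ultimately show ?thesis
    using proots_char_poly_mult_commute[of Tm "card J" "card I" Sm]
    by (simp add: Tm_def Sm_def)
qed

lemma arcs_eq_Sigma: "simple_graph V E \<Longrightarrow> arcs V E = Sigma V (\<lambda>u. {w \<in> V. E u w})"
  by (auto simp: arcs_def simple_graph_def)

lemma card_arcs_regular:
  assumes "simple_graph V E" and "regular V E d"
  shows "card (arcs V E) = card V * d"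
  using assms by (simp add: arcs_eq_Sigma card_SigmaI simple_graph_def regular_def degree_def)

lemma arc_walk_eq_sum:
  assumes "simple_graph V E" and "regular V E d" and "a \<in> arcs V E"
  shows "arc_walk V E a b = (\<Sum>w\<in>V. of_bool (snd a = w) / of_nat d * of_bool (w = fst b))"
proof -
  have "snd a \<in> V" and "degree V E (snd a) = d"
    using assms by (auto simp: arcs_def regular_def)
  then show ?thesis
    using assms(1)
    by (auto simp: arc_walk_def simple_graph_def of_bool_def if_distrib sum.delta cong: if_cong)
qed

lemma adjacency_eq_sum:
  assumes "simple_graph V E" and "u \<in> V" and "v \<in> V"
  shows "adjacency E u v = (\<Sum>a\<in>arcs V E. of_bool (u = fst a) * of_bool (snd a = v))"
proof -
  have "(\<Sum>a\<in>arcs V E. of_bool (u = fst a) * of_bool (snd a = v)) =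
      (\<Sum>a\<in>arcs V E. if a = (u, v) then 1 else (0::complex))"
    by (rule sum.cong) auto
  also have "\<dots> = adjacency E u v"
    using assms by (simp add: arcs_eq_Sigma simple_graph_def adjacency_def)
  finally show ?thesis ..
qed

lemma eigenvalues_arc_walk:
  assumes G: "simple_graph V E" and reg: "regular V E d" and "d > 0"
  shows "eigenvalues (arcs V E) (arc_walk V E) =
    replicate_mset (card V * (d - 1)) 0 +
      image_mset (\<lambda>\<mu>. \<mu> / of_nat d) (eigenvalues V (adjacency E))"
proof -
  let ?T = "\<lambda>a w. of_bool (snd a = w) / of_nat d :: complex"
  let ?S = "\<lambda>w b. of_bool (w = fst b) :: complex"
  have fin: "finite V" "finite (arcs V E)"
    using G by (simp_all add: simple_graph_def arcs_eq_Sigma)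
  have "eigenvalues (arcs V E) (arc_walk V E) =
      eigenvalues (arcs V E) (\<lambda>a b. \<Sum>w\<in>V. ?T a w * ?S w b)"
    using arc_walk_eq_sum[OF G reg] by (rule eigenvalues_cong)
  moreover have "eigenvalues V (\<lambda>u v. \<Sum>a\<in>arcs V E. ?S u a * ?T a v) =
      image_mset (\<lambda>\<mu>. \<mu> / of_nat d) (eigenvalues V (adjacency E))"
  proof -
    have "eigenvalues V (\<lambda>u v. \<Sum>a\<in>arcs V E. ?S u a * ?T a v) =
        eigenvalues V (\<lambda>u v. (1 / of_nat d) * adjacency E u v)"
      by (rule eigenvalues_cong) (simp add: adjacency_eq_sum[OF G] sum_distrib_left)
    also have "\<dots> = image_mset ((*) (1 / of_nat d)) (eigenvalues V (adjacency E))"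
      using fin \<open>d > 0\<close> by (intro eigenvalues_smult) auto
    also have "(*) (1 / of_nat d) = (\<lambda>\<mu>::complex. \<mu> / of_nat d)"
      by auto
    finally show ?thesis .
  qed
  ultimately have "replicate_mset (card V) 0 + eigenvalues (arcs V E) (arc_walk V E) =
      replicate_mset (card V * d) 0 +
        image_mset (\<lambda>\<mu>. \<mu> / of_nat d) (eigenvalues V (adjacency E))"
    using eigenvalues_mult_commute[OF fin, of ?T ?S] by (simp add: card_arcs_regular[OF G reg])
  moreover have "replicate_mset (card V * d) (0::complex) =
      replicate_mset (card V) 0 + replicate_mset (card V * (d - 1)) 0"
    using \<open>d > 0\<close> by (simp add: multiset_eq_iff algebra_simps)
  ultimately show ?thesis
    by (simp add: add.assoc)
qed

lemma kemeny_eq_if_eigenvalues_eq: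
  fixes c :: complex
  assumes eig: "eigenvalues S P = replicate_mset m 0 + image_mset (\<lambda>\<mu>. \<mu> / c) M"
    and "c \<noteq> 0"
  shows "kemeny S P = of_nat m + (\<Sum>\<mu>\<in># M - {#c#}. c / (c - \<mu>))"
proof -
  have "inj (\<lambda>\<mu>. \<mu> / c)"
    using \<open>c \<noteq> 0\<close> by (auto intro: injI)
  then have "image_mset (\<lambda>\<mu>. \<mu> / c) M - {#1#} = image_mset (\<lambda>\<mu>. \<mu> / c) (M - {#c#})"
    using image_mset_diff_if_inj[of "\<lambda>\<mu>. \<mu> / c" M "{#c#}"] \<open>c \<noteq> 0\<close> by simp
  moreover have "(replicate_mset m 0 + X) - {#1#} = replicate_mset m 0 + (X - {#1#})"
    for X :: "complex multiset"
    by (simp add: multiset_eq_iff)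
  (* for \<mu> = c both sides are 0, by the convention x / 0 = 0 *)
  moreover have "1 / (1 - \<mu> / c) = c / (c - \<mu>)" for \<mu>
    using \<open>c \<noteq> 0\<close> by (cases "\<mu> = c") (simp_all add: field_simps)
  ultimately show ?thesis
    unfolding kemeny_def eig by (simp add: image_mset.compositionality o_def)
qed

theorem lemma3p1:
  fixes V :: "'a set" and E :: "'a \<Rightarrow> 'a \<Rightarrow> bool" and d :: nat
  assumes "simple_graph V E" and "connected_graph V E" and "regular V E d" and "d \<ge> 3"
  shows "edge_kemeny V E =
    of_nat (card V) * (of_nat d - 1) +
    (\<Sum>mu\<in># eigenvalues V (adjacency E) - {#of_nat d#}. of_nat d / (of_nat d - mu))"
proof -
  have "d > 0" using \<open>d \<ge> 3\<close> by simp
  have "edge_kemeny V E = of_nat (card V * (d - 1)) +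
      (\<Sum>mu\<in># eigenvalues V (adjacency E) - {#of_nat d#}. of_nat d / (of_nat d - mu))"
    unfolding edge_kemeny_def using \<open>d > 0\<close>
    by (intro kemeny_eq_if_eigenvalues_eq eigenvalues_arc_walk[OF assms(1,3)]) simp_all
  also have "of_nat (card V * (d - 1)) = (of_nat (card V) * (of_nat d - 1) :: complex)"
    using \<open>d > 0\<close> by (simp add: of_nat_diff)
  finally show ?thesis .
qed

end
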